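(* Let $0<c<\Gamma_0$ and $t>0$, and let $\mathcal D=\{(\tau,p):0<\tau<t,\ c<p<\Gamma_0\}$. Let $A$ be the cooperation area, regions V and VI, and $w_0,w_1,w_2,A_s,A_c$ be as defined in the context. - If the restriction of $A$ to region V attains its maximum at a point $(\tau^\star,p^\star)$ of region V, then $$A_c(\tau^\star,p^\star;w_1,1)-A_s(\tau^\star,p^\star;w_0,w_1)=1-2w_1+w_0.$$ - If the restriction of $A$ to region VI attains its maximum at a point $(\tau^\star,p^\star)$ of region VI, then $$A_s(\tau^\star,p^\star;w_2,1)-A_c(\tau^\star,p^\star;w_0,w_2)=1-2w_2+w_0.$$ In both cases $w_0,w_1,w_2$ are evaluated at $(\tau^\star,p^\star)$.
   Context: The client utility is linear: $\Gamma(d)=\Gamma_0(1-d)$. For $(\tau,p)\in\mathcal D$ write $s=\tau/t$ and, for $w\in(0,1]$, set $K(w)=1-(1-w)s$. Define $$d_s(w;\tau,p)=1-\frac{cK(w)}{wp},\qquad d_c(w;\tau,p)=1-\frac{p}{\Gamma_0K(w)}.$$ The cooperation area is $$A(\tau,p)=\int_0^1\max\{\min(d_s,d_c),0\}\,dw.$$ For $0\le x\le y\le1$, let $$A_s(\tau,p;x,y)=\int_x^y d_s(w;\tau,p)\,dw,\qquad A_c(\tau,p;x,y)=\int_x^y d_c(w;\tau,p)\,dw.$$ Define the thresholds $$w_0=\max\left\{\frac{c(t-\tau)}{pt-c\tau},\ \frac{pt-\Gamma_0(t-\tau)}{\Gamma_0\tau}\right\},$$ $$w_1=\left(\frac{p-\sqrt{p^2-4c\Gamma_0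 s(1-s)}}{2s\sqrt{c\Gamma_0}}\right)^2,\qquad w_2=\left(\frac{p+\sqrt{p^2-4c\Gamma_0 s(1-s)}}{2s\sqrt{c\Gamma_0}}\right)^2.$$ The regions (subsets of $\mathcal D$) are: - region V: $p^2\ge 4c\Gamma_0 s(1-s)$, $p<\Gamma_0(1-s)+cs$, and $p>\sqrt{c\Gamma_0}$; - region VI: $p^2\ge4c\Gamma_0 s(1-s)$, $p>\Gamma_0(1-s)+cs$, and $p<\sqrt{c\Gamma_0}$. *)

theory Defs
  imports "HOL-Analysis.Analysis"
begin

text \<open>Parameters: c, G (= Gamma_0), t. Point (tau, p); s = tau / t.\<close>

definition Kw :: "real \<Rightarrow> real \<Rightarrow> real \<Rightarrow> real" where
  "Kw t tau w = 1 - (1 - w) * (tau / t)"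

definition d_s :: "real \<Rightarrow> real \<Rightarrow> real \<Rightarrow> real \<Rightarrow> real \<Rightarrow> real" where
  "d_s c t tau p w = 1 - c * Kw t tau w / (w * p)"

definition d_c :: "real \<Rightarrow> real \<Rightarrow> real \<Rightarrow> real \<Rightarrow> real \<Rightarrow> real" where
  "d_c G t tau p w = 1 - p / (G * Kw t tau w)"

definition coop_area :: "real \<Rightarrow> real \<Rightarrow> real \<Rightarrow> real \<Rightarrow> real \<Rightarrow> real" where
  "coop_area c G t tau p =
     integral {0..1} (\<lambda>w. max (min (d_s c t tau p w) (d_c G t tau p w)) 0)"

definition A_s :: "real \<Rightarrow> real \<Rightarrow> real \<Rightarrow> real \<Rightarrow> real \<Rightarrow> real \<Rightarrow> real" where
  "A_s c t tau p x y = integral {x..y} (d_s c t tau p)"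

definition A_c :: "real \<Rightarrow> real \<Rightarrow> real \<Rightarrow> real \<Rightarrow> real \<Rightarrow> real \<Rightarrow> real" where
  "A_c G t tau p x y = integral {x..y} (d_c G t tau p)"

definition w0 :: "real \<Rightarrow> real \<Rightarrow> real \<Rightarrow> real \<Rightarrow> real \<Rightarrow> real" where
  "w0 c G t tau p = max (c * (t - tau) / (p * t - c * tau)) ((p * t - G * (t - tau)) / (G * tau))"

definition w1 :: "real \<Rightarrow> real \<Rightarrow> real \<Rightarrow> real \<Rightarrow> real \<Rightarrow> real" where
  "w1 c G t tau p = (let s = tau / t in
     ((p - sqrt (p\<^sup>2 - 4 * c * G * s * (1 - s))) / (2 * s * sqrt (c * G)))\<^sup>2)"

definition w2 :: "real \<Rightarrow> real \<Rightarrow> real \<Rightarrow> real \<Rightarrow> real \<Rightarrow> real" where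
  "w2 c G t tau p = (let s = tau / t in
     ((p + sqrt (p\<^sup>2 - 4 * c * G * s * (1 - s))) / (2 * s * sqrt (c * G)))\<^sup>2)"

definition in_D :: "real \<Rightarrow> real \<Rightarrow> real \<Rightarrow> real \<Rightarrow> real \<Rightarrow> bool" where
  "in_D c G t tau p \<longleftrightarrow> 0 < tau \<and> tau < t \<and> c < p \<and> p < G"

definition regionV :: "real \<Rightarrow> real \<Rightarrow> real \<Rightarrow> real \<Rightarrow> real \<Rightarrow> bool" where
  "regionV c G t tau p \<longleftrightarrow> in_D c G t tau p \<and>
     (let s = tau / t in p\<^sup>2 \<ge> 4 * c * G * s * (1 - s) \<and> p < G * (1 - s) + c * s
        \<and> p > sqrt (c * G))"

definition regionVI :: "real \<Rightarrow> real \<Rightarrow> real \<Rightarrow> real \<Rightarrow> real \<Rightarrow> bool" where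
  "regionVI c G t tau p \<longleftrightarrow> in_D c G t tau p \<and>
     (let s = tau / t in p\<^sup>2 \<ge> 4 * c * G * s * (1 - s) \<and> p > G * (1 - s) + c * s
        \<and> p < sqrt (c * G))"

end

theory Submission
  imports Defs
begin

(* For fixed tau the region V is an open interval of prices p, on which the integrand
   max (min d_s d_c) 0 vanishes on (0, w0], equals d_s on [w0, w1] and d_c on [w1, 1]:
   w0 is the zero of d_s, and d_c - d_s has the sign of the quadratic
   sqrt (c G) K (u^2) - p u in u = sqrt w, whose roots are sqrt w1 and sqrt w2.
   So A = A_s (w0, w1) + A_c (w1, 1). Differentiating in p, the terms coming from the
   moving endpoints cancel because d_s (w0) = 0 and d_s (w1) = d_c (w1), while the
   antiderivatives S and C of d_s and d_c satisfy p dS/dp = w - S and p dC/dp = C - w.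
   Hence p dA/dp = A_c (w1, 1) - A_s (w0, w1) - (1 - 2 w1 + w0), which vanishes at a
   maximiser. Region VI is the same picture with d_s and d_c exchanged and w2 in place
   of w1. *)

lemma four_mult_le_square_add:
  fixes x y :: real
  shows "4 * x * y \<le> (x + y)\<^sup>2"
  using zero_le_power2[of "x - y"] by (simp add: power2_eq_square algebra_simps)

lemma quadratic_eq_factor:
  fixes a b c x :: real
  assumes "a \<noteq> 0" "0 \<le> b\<^sup>2 - 4 * a * c"
  shows "a * x\<^sup>2 + b * x + c
       = a * (x - (- b - sqrt (b\<^sup>2 - 4 * a * c)) / (2 * a))
           * (x - (- b + sqrt (b\<^sup>2 - 4 * a * c)) / (2 * a))"
proof -
  define d where "d = sqrt (b\<^sup>2 - 4 * a * c)"
  have "d\<^sup>2 = b\<^sup>2 - 4 * a * c" using assms(2) by (simp add: d_def)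
  then have c: "c = (b\<^sup>2 - d\<^sup>2) / (4 * a)" using assms(1) by (simp add: field_simps)
  show ?thesis
    unfolding d_def[symmetric] using assms(1) by (subst c) (simp add: field_simps power2_eq_square)
qed

lemma mult_diff_nonneg_iff:
  fixes x u v :: real
  assumes "u \<le> v"
  shows "0 \<le> (x - u) * (x - v) \<longleftrightarrow> x \<le> u \<or> v \<le> x"
  using assms by (auto simp: zero_le_mult_iff)

lemma mult_diff_nonpos_iff:
  fixes x u v :: real
  assumes "u \<le> v"
  shows "(x - u) * (x - v) \<le> 0 \<longleftrightarrow> u \<le> x \<and> x \<le> v"
  using assms by (auto simp: mult_le_0_iff)

lemma DERIV_open_max_eq_0:
  fixes f :: "real \<Rightarrow> real"
  assumes "(f has_real_derivative l) (at x)" "open S" "x \<in> S" "\<And>y. y \<in> S \<Longrightarrow> f y \<le> f x"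
  shows "l = 0"
proof -
  obtain e where "0 < e" "ball x e \<subseteq> S" using assms(2,3) by (rule openE)
  then show ?thesis
    using assms(4) by (intro DERIV_local_max[OF assms(1) \<open>0 < e\<close>]) (auto simp: dist_real_def)
qed

definition crossing_pattern :: "(real \<Rightarrow> real) \<Rightarrow> (real \<Rightarrow> real) \<Rightarrow> real \<Rightarrow> real \<Rightarrow> bool" where
  "crossing_pattern f g a y \<longleftrightarrow> 0 < a \<and> a \<le> y \<and> y \<le> 1
     \<and> (\<forall>w\<in>{0<..a}. f w \<le> 0)
     \<and> (\<forall>w\<in>{a..y}. 0 \<le> f w \<and> f w \<le> g w)
     \<and> (\<forall>w\<in>{y..1}. 0 \<le> g w \<and> g w \<le> f w)"

lemma crossing_pattern_endpoints:
  assumes "crossing_pattern f g a y"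
  shows "f a = 0" "f y = g y"
proof -
  have "0 < a" "a \<le> y" "y \<le> 1" using assms by (simp_all add: crossing_pattern_def)
  then have "f a \<le> 0" "0 \<le> f a \<and> f a \<le> g a" "0 \<le> f y \<and> f y \<le> g y" "0 \<le> g y \<and> g y \<le> f y"
    using assms unfolding crossing_pattern_def by simp_all
  then show "f a = 0" "f y = g y" by simp_all
qed

lemma has_integral_clipped_min:
  assumes pat: "crossing_pattern f g a y"
    and f: "(f has_integral I) {a..y}" and g: "(g has_integral J) {y..1}"
  shows "((\<lambda>w. max (min (f w) (g w)) 0) has_integral I + J) {0..1}"
proof -
  define h where "h = (\<lambda>w. max (min (f w) (g w)) 0)"
  have a: "0 < a" "a \<le> y" "y \<le> 1"
    and left: "\<And>w. 0 < w \<Longrightarrow> w \<le> a \<Longrightarrow> f w \<le> 0"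
    and mid: "\<And>w. a \<le> w \<Longrightarrow> w \<le> y \<Longrightarrow> 0 \<le> f w \<and> f w \<le> g w"
    and right: "\<And>w. y \<le> w \<Longrightarrow> w \<le> 1 \<Longrightarrow> 0 \<le> g w \<and> g w \<le> f w"
    using pat by (simp_all add: crossing_pattern_def)
  have "h w = 0" if "w \<in> {0..a} - {0}" for w
    using left[of w] that by (simp add: h_def)
  then have h0: "(h has_integral 0) {0..a}"
    using has_integral_spike_finite[where S="{0}" and T="{0..a}" and f="\<lambda>_. 0" and g=h] by auto
  have hI: "(h has_integral I) {a..y}"
    by (rule has_integral_eq[OF _ f]) (auto simp: h_def dest: mid)
  have hJ: "(h has_integral J) {y..1}"
    by (rule has_integral_eq[OF _ g]) (auto simp: h_def dest: right)
  have "(h has_integral 0 + I) {0..y}"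
    using a by (intro has_integral_combine[OF _ _ h0 hI]) auto
  then have "(h has_integral 0 + I + J) {0..1}"
    using a by (intro has_integral_combine[OF _ _ _ hJ]) auto
  then show ?thesis by (simp add: h_def)
qed

section \<open>Zeros of d_s and d_c\<close>

lemma Kw_eq:
  assumes "s = tau / t"
  shows "Kw t tau w = 1 - s + s * w"
  by (simp add: Kw_def assms[symmetric] algebra_simps)

lemma K_pos: "0 \<le> s \<Longrightarrow> s < 1 \<Longrightarrow> 0 \<le> w \<Longrightarrow> 0 < 1 - s + s * (w::real)"
  by (simp add: add_pos_nonneg)

lemma d_s_at_1: "d_s c t tau p 1 = 1 - c / p"
  by (simp add: d_s_def Kw_def)

lemma d_c_at_1: "d_c G t tau p 1 = 1 - p / G"
  by (simp add: d_c_def Kw_def)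

definition d_s_root :: "real \<Rightarrow> real \<Rightarrow> real \<Rightarrow> real" where
  "d_s_root c s p = c * (1 - s) / (p - c * s)"

definition d_c_root :: "real \<Rightarrow> real \<Rightarrow> real \<Rightarrow> real" where
  "d_c_root G s p = (p - G * (1 - s)) / (G * s)"

lemma w0_eq_max_roots:
  assumes "t \<noteq> 0" "s = tau / t"
  shows "w0 c G t tau p = max (d_s_root c s p) (d_c_root G s p)"
proof -
  have tau: "tau = s * t" using assms by simp
  have "c * (t - tau) / (p * t - c * tau) = (t * (c * (1 - s))) / (t * (p - c * s))"
    "(p * t - G * (t - tau)) / (G * tau) = (t * (p - G * (1 - s))) / (t * (G * s))"
    unfolding tau by (simp_all add: algebra_simps)
  then show ?thesis
    using assms(1) by (simp add: w0_def d_s_root_def d_c_root_def)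
qed

lemma d_s_eq_root_factor:
  assumes "s = tau / t" "w \<noteq> 0" "p \<noteq> 0" "p \<noteq> c * s"
  shows "d_s c t tau p w = (p - c * s) * (w - d_s_root c s p) / (w * p)"
  using assms(2-4) by (simp add: d_s_def Kw_eq[OF assms(1)] d_s_root_def field_simps)

lemma d_c_eq_root_factor:
  assumes "s = tau / t" "G \<noteq> 0" "s \<noteq> 0" "1 - s + s * w \<noteq> 0"
  shows "d_c G t tau p w = s * (w - d_c_root G s p) / (1 - s + s * w)"
proof -
  define K where "K = 1 - s + s * w"
  have K: "K \<noteq> 0" using assms(4) by (simp add: K_def)
  have "d_c G t tau p w = (G * K - p) / G / K"
    unfolding d_c_def Kw_eq[OF assms(1)] K_def[symmetric] using assms(2) K
    by (simp add: field_simps)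
  also have "(G * K - p) / G = s * (w - d_c_root G s p)"
    using assms(2,3) by (simp add: K_def d_c_root_def field_simps)
  finally show ?thesis by (simp add: K_def)
qed

lemma d_s_nonneg_iff:
  assumes "s = tau / t" "0 < w" "0 < p" "c * s < p"
  shows "0 \<le> d_s c t tau p w \<longleftrightarrow> d_s_root c s p \<le> w"
proof -
  have "0 < w * p" "0 < p - c * s" using assms(2-) by simp_all
  then show ?thesis
    using assms(2,3)
    by (auto simp: d_s_eq_root_factor[OF assms(1)] zero_le_divide_iff zero_le_mult_iff
        mult_le_0_iff)
qed

lemma d_s_nonpos_iff:
  assumes "s = tau / t" "0 < w" "0 < p" "c * s < p"
  shows "d_s c t tau p w \<le> 0 \<longleftrightarrow> w \<le> d_s_root c s p"
proof -
  have "0 < w * p" "0 < p - c * s" using assms(2-) by simp_all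
  then show ?thesis
    using assms(2,3)
    by (auto simp: d_s_eq_root_factor[OF assms(1)] divide_le_0_iff mult_le_0_iff zero_le_mult_iff)
qed

lemma d_c_nonneg_iff:
  assumes "s = tau / t" "0 < s" "s < 1" "0 \<le> w" "0 < G"
  shows "0 \<le> d_c G t tau p w \<longleftrightarrow> d_c_root G s p \<le> w"
  using assms(2-) K_pos[of s w]
  by (simp add: d_c_eq_root_factor[OF assms(1)] zero_le_divide_iff zero_le_mult_iff mult_le_0_iff)

lemma d_c_nonpos_iff:
  assumes "s = tau / t" "0 < s" "s < 1" "0 \<le> w" "0 < G"
  shows "d_c G t tau p w \<le> 0 \<longleftrightarrow> w \<le> d_c_root G s p"
  using assms(2-) K_pos[of s w]
  by (simp add: d_c_eq_root_factor[OF assms(1)] divide_le_0_iff mult_le_0_iff zero_le_mult_iff)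

lemma d_c_root_lt_d_s_root:
  assumes "0 < c" "0 < G" "0 < s" "c * s < p" "p < G * (1 - s) + c * s"
  shows "d_c_root G s p < d_s_root c s p"
proof -
  have "G * (p + G * s) < G * (G + c * s)"
    using assms(2,5) by (intro mult_strict_left_mono) (simp_all add: algebra_simps)
  then have "d_c_root G s p < c / G"
    using assms(2,3) by (simp add: d_c_root_def field_simps distrib_left)
  have "c * (p + G * s) < c * (G + c * s)"
    using assms(1,5) by (intro mult_strict_left_mono) (simp_all add: algebra_simps)
  then have "c / G < d_s_root c s p"
    using assms by (simp add: d_s_root_def field_simps distrib_left)
  with \<open>d_c_root G s p < c / G\<close>
  show ?thesis by simp
qed

lemma d_s_root_lt_d_c_root:
  assumes "0 < c" "0 < G" "0 < s" "c * s < p" "G * (1 - s) + c * s < p"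
  shows "d_s_root c s p < d_c_root G s p"
proof -
  have "c * (G + c * s) < c * (p + G * s)"
    using assms(1,5) by (intro mult_strict_left_mono) (simp_all add: algebra_simps)
  then have "d_s_root c s p < c / G"
    using assms by (simp add: d_s_root_def field_simps distrib_left)
  have "c / G < d_c_root G s p"
    using assms(2,3,5) by (simp add: d_c_root_def field_simps)
  with \<open>d_s_root c s p < c / G\<close>
  show ?thesis by simp
qed

section \<open>Crossings of d_s and d_c\<close>

lemma d_c_minus_d_s:
  assumes "s = tau / t" "0 < c" "0 < G" "0 < p" "0 < w" "0 < 1 - s + s * w"
  shows "d_c G t tau p w - d_s c t tau p w
       = (sqrt (c * G) * (1 - s + s * w) - p * sqrt w)
         * (sqrt (c * G) * (1 - s + s * w) + p * sqrt w) / (G * (1 - s + s * w) * w * p)"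
proof -
  define K where "K = 1 - s + s * w"
  have "(sqrt (c * G) * K - p * sqrt w) * (sqrt (c * G) * K + p * sqrt w)
      = (sqrt (c * G))\<^sup>2 * K\<^sup>2 - p\<^sup>2 * (sqrt w)\<^sup>2"
    by (simp add: algebra_simps power2_eq_square)
  also have "\<dots> = c * G * K\<^sup>2 - p\<^sup>2 * w"
    using assms(2,3,5) by simp
  finally have num: "(sqrt (c * G) * K - p * sqrt w) * (sqrt (c * G) * K + p * sqrt w)
      = c * G * K\<^sup>2 - p\<^sup>2 * w" .
  have "0 < K" using assms(6) by (simp add: K_def)
  then show ?thesis
    unfolding d_c_def d_s_def Kw_eq[OF assms(1)] K_def[symmetric] num
    using assms(3-5) by (simp add: field_simps power2_eq_square)
qed

lemma sqrt_w1_eq: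
  assumes "s = tau / t" "0 \<le> c" "0 \<le> G" "0 \<le> s" "s \<le> 1" "0 \<le> p"
  shows "sqrt (w1 c G t tau p)
       = (p - sqrt (p\<^sup>2 - 4 * c * G * s * (1 - s))) / (2 * s * sqrt (c * G))"
proof -
  have "4 * c * G * s * (1 - s) \<ge> 0" using assms(2-5) by simp
  then have "sqrt (p\<^sup>2 - 4 * c * G * s * (1 - s)) \<le> sqrt (p\<^sup>2)"
    by (intro real_sqrt_le_mono) simp
  then have "sqrt (p\<^sup>2 - 4 * c * G * s * (1 - s)) \<le> p"
    using assms(6) by simp
  then show ?thesis
    using assms(2-5) by (simp add: w1_def Let_def assms(1)[symmetric])
qed

lemma sqrt_w2_eq:
  assumes "s = tau / t" "0 \<le> c" "0 \<le> G" "0 \<le> s" "0 \<le> p"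
    and "4 * c * G * s * (1 - s) \<le> p\<^sup>2"
  shows "sqrt (w2 c G t tau p)
       = (p + sqrt (p\<^sup>2 - 4 * c * G * s * (1 - s))) / (2 * s * sqrt (c * G))"
  using assms(2-) by (simp add: w2_def Let_def assms(1)[symmetric])

lemma sqrt_w1_le_sqrt_w2:
  assumes "s = tau / t" "0 \<le> c" "0 \<le> G" "0 \<le> s" "s \<le> 1" "0 \<le> p"
    and "4 * c * G * s * (1 - s) \<le> p\<^sup>2"
  shows "sqrt (w1 c G t tau p) \<le> sqrt (w2 c G t tau p)"
  using assms(2-) by (simp add: sqrt_w1_eq[OF assms(1)] sqrt_w2_eq[OF assms(1)] divide_right_mono)

lemma crossing_quadratic_factor:
  assumes "s = tau / t" "0 < c" "0 < G" "0 < s" "s < 1" "0 < p" "0 \<le> w"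
    and "4 * c * G * s * (1 - s) \<le> p\<^sup>2"
  shows "sqrt (c * G) * (1 - s + s * w) - p * sqrt w
       = sqrt (c * G) * s * ((sqrt w - sqrt (w1 c G t tau p)) * (sqrt w - sqrt (w2 c G t tau p)))"
proof -
  define r where "r = sqrt (c * G)"
  have r: "0 < r" "r\<^sup>2 = c * G" using assms(2,3) by (simp_all add: r_def)
  have disc: "(- p)\<^sup>2 - 4 * (r * s) * (r * (1 - s)) = p\<^sup>2 - 4 * c * G * s * (1 - s)"
  proof -
    have "(- p)\<^sup>2 - 4 * (r * s) * (r * (1 - s)) = p\<^sup>2 - 4 * r\<^sup>2 * s * (1 - s)"
      by (simp add: algebra_simps power2_eq_square)
    then show ?thesis using r(2) by (simp add: mult.assoc)
  qed
  have roots: "sqrt (w1 c G t tau p) = (p - sqrt (p\<^sup>2 - 4 * c * G * s * (1 - s))) / (2 * s * r)"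
    "sqrt (w2 c G t tau p) = (p + sqrt (p\<^sup>2 - 4 * c * G * s * (1 - s))) / (2 * s * r)"
    unfolding r_def using assms(2-8)
    by (simp_all add: sqrt_w1_eq[OF assms(1)] sqrt_w2_eq[OF assms(1)])
  have "r * (1 - s + s * w) - p * sqrt w = (r * s) * (sqrt w)\<^sup>2 + (- p) * sqrt w + r * (1 - s)"
    using assms(7) by (simp add: algebra_simps)
  also have "\<dots> = r * s * ((sqrt w - sqrt (w1 c G t tau p)) * (sqrt w - sqrt (w2 c G t tau p)))"
    using quadratic_eq_factor[of "r * s" "- p" "r * (1 - s)" "sqrt w", unfolded disc]
      roots r(1) assms(4,8)
    by (simp add: mult_ac)
  finally show ?thesis by (simp add: r_def)
qed

lemma d_c_minus_d_s_factor:
  assumes "s = tau / t" "0 < c" "0 < G" "0 < s" "s < 1" "0 < p" "0 < w"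
    and "4 * c * G * s * (1 - s) \<le> p\<^sup>2"
  obtains P where "0 < P"
    "d_c G t tau p w - d_s c t tau p w
       = P * ((sqrt w - sqrt (w1 c G t tau p)) * (sqrt w - sqrt (w2 c G t tau p)))"
proof
  define r where "r = sqrt (c * G)"
  define K where "K = 1 - s + s * w"
  have "0 < r" "0 < K" using assms(2-5,7) K_pos[of s w] by (simp_all add: r_def K_def)
  then show "0 < r * s * (r * K + p * sqrt w) / (G * K * w * p)"
    using assms(3,4,6,7) by (simp add: add_pos_nonneg)
  show "d_c G t tau p w - d_s c t tau p w
     = r * s * (r * K + p * sqrt w) / (G * K * w * p)
       * ((sqrt w - sqrt (w1 c G t tau p)) * (sqrt w - sqrt (w2 c G t tau p)))"
    using d_c_minus_d_s[OF assms(1-3,6,7), folded r_def K_def]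
      crossing_quadratic_factor[OF assms(1-6) less_imp_le[OF assms(7)] assms(8), folded r_def K_def]
      \<open>0 < K\<close>
    by (simp add: mult_ac)
qed

lemma d_s_le_d_c_iff:
  assumes "s = tau / t" "0 < c" "0 < G" "0 < s" "s < 1" "0 < p" "0 < w"
    and "4 * c * G * s * (1 - s) \<le> p\<^sup>2"
  shows "d_s c t tau p w \<le> d_c G t tau p w \<longleftrightarrow> w \<le> w1 c G t tau p \<or> w2 c G t tau p \<le> w"
proof -
  obtain P where P: "0 < P" "d_c G t tau p w - d_s c t tau p w
       = P * ((sqrt w - sqrt (w1 c G t tau p)) * (sqrt w - sqrt (w2 c G t tau p)))"
    using d_c_minus_d_s_factor[OF assms] by blast
  have "d_s c t tau p w \<le> d_c G t tau p w \<longleftrightarrow> 0 \<le> d_c G t tau p w - d_s c t tau p w"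
    by simp
  also have "\<dots> \<longleftrightarrow> 0 \<le> (sqrt w - sqrt (w1 c G t tau p)) * (sqrt w - sqrt (w2 c G t tau p))"
    unfolding P(2) using P(1) by (simp add: zero_le_mult_iff)
  also have "\<dots> \<longleftrightarrow> sqrt w \<le> sqrt (w1 c G t tau p) \<or> sqrt (w2 c G t tau p) \<le> sqrt w"
    using sqrt_w1_le_sqrt_w2[OF assms(1)] assms(2-8) by (simp add: mult_diff_nonneg_iff)
  finally show ?thesis by simp
qed

lemma d_c_le_d_s_iff:
  assumes "s = tau / t" "0 < c" "0 < G" "0 < s" "s < 1" "0 < p" "0 < w"
    and "4 * c * G * s * (1 - s) \<le> p\<^sup>2"
  shows "d_c G t tau p w \<le> d_s c t tau p w \<longleftrightarrow> w1 c G t tau p \<le> w \<and> w \<le> w2 c G t tau p"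
proof -
  obtain P where P: "0 < P" "d_c G t tau p w - d_s c t tau p w
       = P * ((sqrt w - sqrt (w1 c G t tau p)) * (sqrt w - sqrt (w2 c G t tau p)))"
    using d_c_minus_d_s_factor[OF assms] by blast
  have "d_c G t tau p w \<le> d_s c t tau p w \<longleftrightarrow> d_c G t tau p w - d_s c t tau p w \<le> 0"
    by simp
  also have "\<dots> \<longleftrightarrow> (sqrt w - sqrt (w1 c G t tau p)) * (sqrt w - sqrt (w2 c G t tau p)) \<le> 0"
    unfolding P(2) using P(1) by (simp add: mult_le_0_iff)
  also have "\<dots> \<longleftrightarrow> sqrt (w1 c G t tau p) \<le> sqrt w \<and> sqrt w \<le> sqrt (w2 c G t tau p)"
    using sqrt_w1_le_sqrt_w2[OF assms(1)] assms(2-8) by (simp add: mult_diff_nonpos_iff)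
  finally show ?thesis by simp
qed

lemma w1_differentiable:
  assumes "0 < c" "0 < G" "tau / t \<noteq> 0" "4 * c * G * (tau / t) * (1 - tau / t) < p\<^sup>2"
  shows "(\<lambda>q. w1 c G t tau q) differentiable (at p)"
  unfolding real_differentiable_def w1_def Let_def using assms
  by (auto intro!: exI derivative_eq_intros)

lemma w2_differentiable:
  assumes "0 < c" "0 < G" "tau / t \<noteq> 0" "4 * c * G * (tau / t) * (1 - tau / t) < p\<^sup>2"
  shows "(\<lambda>q. w2 c G t tau q) differentiable (at p)"
  unfolding real_differentiable_def w2_def Let_def using assms
  by (auto intro!: exI derivative_eq_intros)

section \<open>Antiderivatives\<close>

definition d_s_prim :: "real \<Rightarrow> real \<Rightarrow> real \<Rightarrow> real \<Rightarrow> real" where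
  "d_s_prim c s p w = w - c * ((1 - s) * ln w + s * w) / p"

definition d_c_prim :: "real \<Rightarrow> real \<Rightarrow> real \<Rightarrow> real \<Rightarrow> real" where
  "d_c_prim G s p w = w - p * ln (1 - s + s * w) / (G * s)"

lemma d_s_prim_deriv:
  assumes "s = tau / t" "0 < w" "p \<noteq> 0"
  shows "(d_s_prim c s p has_real_derivative d_s c t tau p w) (at w)"
  unfolding d_s_prim_def d_s_def Kw_eq[OF assms(1)] using assms(2,3)
  by (auto intro!: derivative_eq_intros simp: field_simps)

lemma d_c_prim_deriv:
  assumes "s = tau / t" "0 < 1 - s + s * w" "G \<noteq> 0" "s \<noteq> 0"
  shows "(d_c_prim G s p has_real_derivative d_c G t tau p w) (at w)"
proof (rule DERIV_cong)
  show "(d_c_prim G s p has_real_derivative 1 - p * (s / (1 - s + s * w)) / (G * s)) (at w)"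
    unfolding d_c_prim_def using assms(2-4) by (auto intro!: derivative_eq_intros)
  show "1 - p * (s / (1 - s + s * w)) / (G * s) = d_c G t tau p w"
    using assms(3,4) by (simp add: d_c_def Kw_eq[OF assms(1)])
qed

lemma has_integral_d_s:
  assumes "s = tau / t" "0 < x" "x \<le> y" "p \<noteq> 0"
  shows "(d_s c t tau p has_integral (d_s_prim c s p y - d_s_prim c s p x)) {x..y}"
proof (rule fundamental_theorem_of_calculus[OF assms(3)])
  fix w assume "w \<in> {x..y}"
  then have "(d_s_prim c s p has_real_derivative d_s c t tau p w) (at w)"
    using assms by (intro d_s_prim_deriv) auto
  then show "(d_s_prim c s p has_vector_derivative d_s c t tau p w) (at w within {x..y})"
    by (simp add: has_real_derivative_iff_has_vector_derivative has_vector_derivative_at_within)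
qed

lemma has_integral_d_c:
  assumes "s = tau / t" "0 < s" "s < 1" "0 \<le> x" "x \<le> y" "G \<noteq> 0"
  shows "(d_c G t tau p has_integral (d_c_prim G s p y - d_c_prim G s p x)) {x..y}"
proof (rule fundamental_theorem_of_calculus[OF assms(5)])
  fix w assume "w \<in> {x..y}"
  then have "(d_c_prim G s p has_real_derivative d_c G t tau p w) (at w)"
    using assms K_pos[of s w] by (intro d_c_prim_deriv) auto
  then show "(d_c_prim G s p has_vector_derivative d_c G t tau p w) (at w within {x..y})"
    by (simp add: has_real_derivative_iff_has_vector_derivative has_vector_derivative_at_within)
qed

lemma A_s_eq_prim:
  assumes "s = tau / t" "0 < x" "x \<le> y" "p \<noteq> 0"
  shows "A_s c t tau p x y = d_s_prim c s p y - d_s_prim c s p x"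
  unfolding A_s_def using has_integral_d_s[OF assms] by (rule integral_unique)

lemma A_c_eq_prim:
  assumes "s = tau / t" "0 < s" "s < 1" "0 \<le> x" "x \<le> y" "G \<noteq> 0"
  shows "A_c G t tau p x y = d_c_prim G s p y - d_c_prim G s p x"
  unfolding A_c_def using has_integral_d_c[OF assms] by (rule integral_unique)

lemma has_integral_A_s:
  assumes "0 < x" "x \<le> y" "p \<noteq> 0"
  shows "(d_s c t tau p has_integral A_s c t tau p x y) {x..y}"
  using has_integral_d_s[OF refl assms] A_s_eq_prim[OF refl assms] by simp

lemma has_integral_A_c:
  assumes "0 < tau / t" "tau / t < 1" "0 \<le> x" "x \<le> y" "G \<noteq> 0"
  shows "(d_c G t tau p has_integral A_c G t tau p x y) {x..y}"
  using has_integral_d_c[OF refl assms] A_c_eq_prim[OF refl assms] by simp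

lemma d_s_prim_chain:
  assumes "s = tau / t" "(Y has_real_derivative Y') (at p)" "0 < Y p" "p \<noteq> 0"
  shows "((\<lambda>q. d_s_prim c s q (Y q)) has_real_derivative
           (Y p - d_s_prim c s p (Y p)) / p + d_s c t tau p (Y p) * Y') (at p)"
  unfolding d_s_prim_def d_s_def Kw_eq[OF assms(1)] using assms(2-4)
  by (auto intro!: derivative_eq_intros simp: field_simps power2_eq_square)

lemma d_c_prim_chain:
  assumes "s = tau / t" "(Y has_real_derivative Y') (at p)" "0 < 1 - s + s * Y p"
    "G \<noteq> 0" "s \<noteq> 0" "p \<noteq> 0"
  shows "((\<lambda>q. d_c_prim G s q (Y q)) has_real_derivative
           (d_c_prim G s p (Y p) - Y p) / p + d_c G t tau p (Y p) * Y') (at p)"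
proof (rule DERIV_cong)
  define K where "K = 1 - s + s * Y p"
  show "((\<lambda>q. d_c_prim G s q (Y q)) has_real_derivative
      Y' - (ln K + p * (s * Y' / K)) / (G * s)) (at p)"
    unfolding d_c_prim_def K_def using assms(2-5) by (auto intro!: derivative_eq_intros)
  have "K \<noteq> 0" using assms(3) by (simp add: K_def)
  then show "Y' - (ln K + p * (s * Y' / K)) / (G * s)
      = (d_c_prim G s p (Y p) - Y p) / p + d_c G t tau p (Y p) * Y'"
    unfolding d_c_prim_def d_c_def Kw_eq[OF assms(1)] K_def[symmetric]
    using assms(4-6) by (simp add: field_simps)
qed

section \<open>Regions V and VI\<close>

lemma discriminant_pos_if_sqrt_less:
  assumes "0 < c" "0 < G" "sqrt (c * G) < p"
  shows "4 * c * G * s * (1 - s) < p\<^sup>2"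
proof -
  have "4 * c * G * s * (1 - s) \<le> c * G"
    using four_mult_le_square_add[of s "1 - s"] assms(1,2) mult_left_mono[of _ _ "c * G"]
    by (simp add: mult_ac)
  also have "c * G = (sqrt (c * G))\<^sup>2" using assms(1,2) by simp
  also have "\<dots> < p\<^sup>2" using assms by (intro power_strict_mono) auto
  finally show ?thesis .
qed

lemma discriminant_pos_if_less:
  fixes c G s p :: real
  assumes "0 < c" "0 < G" "0 \<le> s" "s \<le> 1" "G * (1 - s) + c * s < p"
  shows "4 * c * G * s * (1 - s) < p\<^sup>2"
proof -
  have "4 * c * G * s * (1 - s) \<le> (G * (1 - s) + c * s)\<^sup>2"
    using four_mult_le_square_add[of "G * (1 - s)" "c * s"] by (simp add: mult_ac)
  also have "\<dots> < p\<^sup>2" using assms by (intro power_strict_mono) auto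
  finally show ?thesis .
qed

lemma regionV_iff:
  assumes "0 < c" "c < G"
  shows "regionV c G t tau p \<longleftrightarrow>
    0 < tau \<and> tau < t \<and> sqrt (c * G) < p \<and> p < G * (1 - tau / t) + c * (tau / t)"
proof
  assume R: "0 < tau \<and> tau < t \<and> sqrt (c * G) < p \<and> p < G * (1 - tau / t) + c * (tau / t)"
  define s where "s = tau / t"
  have s: "0 < s" "s < 1" using R by (simp_all add: s_def)
  have "c < sqrt (c * G)" using assms by (intro real_less_rsqrt) (simp add: power2_eq_square)
  moreover have "G * (1 - s) + c * s \<le> G" using assms s by (simp add: algebra_simps)
  moreover have "4 * c * G * s * (1 - s) < p\<^sup>2"
    using R assms by (intro discriminant_pos_if_sqrt_less) auto
  ultimately show "regionV c G t tau p"
    using R unfolding regionV_def in_D_def Let_def s_def[symmetric] by linarith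
qed (simp add: regionV_def in_D_def Let_def)

lemma regionVI_iff:
  assumes "0 < c" "c < G"
  shows "regionVI c G t tau p \<longleftrightarrow>
    0 < tau \<and> tau < t \<and> G * (1 - tau / t) + c * (tau / t) < p \<and> p < sqrt (c * G)"
proof
  assume R: "0 < tau \<and> tau < t \<and> G * (1 - tau / t) + c * (tau / t) < p \<and> p < sqrt (c * G)"
  define s where "s = tau / t"
  have s: "0 < s" "s < 1" using R by (simp_all add: s_def)
  have "c * (1 - s) < G * (1 - s)" using assms s by simp
  then have "c < G * (1 - s) + c * s" by (simp add: algebra_simps)
  moreover have "sqrt (c * G) < G"
    using assms by (intro real_less_lsqrt) (simp_all add: power2_eq_square)
  moreover have "4 * c * G * s * (1 - s) < p\<^sup>2"
    using R assms s by (intro discriminant_pos_if_less) (simp_all add: s_def)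
  ultimately show "regionVI c G t tau p"
    using R unfolding regionVI_def in_D_def Let_def s_def[symmetric] by linarith
qed (simp add: regionVI_def in_D_def Let_def)

lemma regionV_crossing_pattern:
  assumes c: "0 < c" "c < G" and R: "regionV c G t tau p"
  shows "w0 c G t tau p = d_s_root c (tau / t) p"
    and "crossing_pattern (d_s c t tau p) (d_c G t tau p) (w0 c G t tau p) (w1 c G t tau p)"
proof -
  define s where "s = tau / t"
  have tau: "0 < tau" "tau < t" and p: "c < p" "p < G" "p < G * (1 - s) + c * s"
    and D: "4 * c * G * s * (1 - s) \<le> p\<^sup>2" and pr: "sqrt (c * G) < p"
    using R by (simp_all add: regionV_def in_D_def Let_def s_def)
  have s: "0 < s" "s < 1" using tau by (simp_all add: s_def)
  have G: "0 < G" and p0: "0 < p" using c p by simp_all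
  have "c * s < c" using c s by simp
  with p(1) have cs: "c * s < p" by linarith
  have "(sqrt (c * G))\<^sup>2 < p\<^sup>2" using pr c G by (intro power_strict_mono) auto
  then have cG: "c * G < p\<^sup>2" using c G by simp
  define a where "a = d_s_root c s p"
  have ba: "d_c_root G s p < a"
    unfolding a_def using c(1) G s(1) cs p(3) by (rule d_c_root_lt_d_s_root)
  show w0: "w0 c G t tau p = d_s_root c (tau / t) p"
    using w0_eq_max_roots[OF _ s_def] tau ba by (simp add: a_def s_def)
  have a0: "0 < a" unfolding a_def d_s_root_def using c(1) s cs by simp
  note ds_nonneg = d_s_nonneg_iff[OF s_def _ p0 cs]
    and ds_nonpos = d_s_nonpos_iff[OF s_def _ p0 cs]
    and dc_nonneg = d_c_nonneg_iff[OF s_def s _ G, where p=p]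
    and dc_nonpos = d_c_nonpos_iff[OF s_def s _ G, where p=p]
    and ds_le_dc = d_s_le_d_c_iff[OF s_def c(1) G s p0 _ D]
    and dc_le_ds = d_c_le_d_s_iff[OF s_def c(1) G s p0 _ D]
  have "c / p < p / G" using cG p0 G by (simp add: field_simps power2_eq_square)
  then have "\<not> d_s c t tau p 1 \<le> d_c G t tau p 1" by (simp add: d_s_at_1 d_c_at_1)
  then have w12: "w1 c G t tau p < 1" "1 < w2 c G t tau p" using ds_le_dc[of 1] by auto
  have "\<not> d_s c t tau p 1 \<le> 0" using p(1) p0 by (simp add: d_s_at_1)
  then have a1: "a < 1" using ds_nonpos[of 1] by (simp add: a_def)
  have "d_s c t tau p a = 0" using ds_nonneg[OF a0] ds_nonpos[OF a0] by (simp add: a_def)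
  moreover have "\<not> d_c G t tau p a \<le> 0" using dc_nonpos[of a] a0 ba by simp
  ultimately have "a < w1 c G t tau p" using dc_le_ds[OF a0] a1 w12 by auto
  then show "crossing_pattern (d_s c t tau p) (d_c G t tau p) (w0 c G t tau p) (w1 c G t tau p)"
    unfolding crossing_pattern_def w0 s_def[symmetric] a_def[symmetric]
    using a0 w12 ba ds_nonneg ds_nonpos dc_nonneg dc_le_ds ds_le_dc
    by (auto simp: a_def)
qed

lemma regionVI_crossing_pattern:
  assumes c: "0 < c" "c < G" and R: "regionVI c G t tau p"
  shows "w0 c G t tau p = d_c_root G (tau / t) p"
    and "crossing_pattern (d_c G t tau p) (d_s c t tau p) (w0 c G t tau p) (w2 c G t tau p)"
proof -
  define s where "s = tau / t"
  have tau: "0 < tau" "tau < t" and p: "c < p" "p < G" "G * (1 - s) + c * s < p"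
    and D: "4 * c * G * s * (1 - s) \<le> p\<^sup>2" and pr: "p < sqrt (c * G)"
    using R by (simp_all add: regionVI_def in_D_def Let_def s_def)
  have s: "0 < s" "s < 1" using tau by (simp_all add: s_def)
  have G: "0 < G" and p0: "0 < p" using c p by simp_all
  have "c * s < c" using c s by simp
  with p(1) have cs: "c * s < p" by linarith
  have "p\<^sup>2 < (sqrt (c * G))\<^sup>2" using pr p0 by (intro power_strict_mono) auto
  then have cG: "p\<^sup>2 < c * G" using c G by simp
  define a b where "a = d_s_root c s p" and "b = d_c_root G s p"
  have ab: "a < b"
    unfolding a_def b_def using c(1) G s(1) cs p(3) by (rule d_s_root_lt_d_c_root)
  show w0: "w0 c G t tau p = d_c_root G (tau / t) p"
    using w0_eq_max_roots[OF _ s_def] tau ab by (simp add: a_def b_def s_def)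
  have a0: "0 < a" unfolding a_def d_s_root_def using c(1) s cs by simp
  have b0: "0 < b" using a0 ab by simp
  note ds_nonneg = d_s_nonneg_iff[OF s_def _ p0 cs]
    and ds_nonpos = d_s_nonpos_iff[OF s_def _ p0 cs]
    and dc_nonneg = d_c_nonneg_iff[OF s_def s _ G, where p=p]
    and dc_nonpos = d_c_nonpos_iff[OF s_def s _ G, where p=p]
    and ds_le_dc = d_s_le_d_c_iff[OF s_def c(1) G s p0 _ D]
    and dc_le_ds = d_c_le_d_s_iff[OF s_def c(1) G s p0 _ D]
  have "\<not> d_c G t tau p 1 \<le> 0" using p(2) p0 by (simp add: d_c_at_1)
  then have b1: "b < 1" using dc_nonpos[of 1] by (simp add: b_def)
  have "d_c G t tau p b = 0" using dc_nonneg[of b] dc_nonpos[of b] b0 by (simp add: b_def)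
  moreover have "\<not> d_s c t tau p b \<le> 0" using ds_nonpos[OF b0] ab by (simp add: a_def)
  ultimately have wb: "w1 c G t tau p < b" "b < w2 c G t tau p" using ds_le_dc[OF b0] by auto
  have "p / G < c / p" using cG p0 G by (simp add: field_simps power2_eq_square)
  then have "\<not> d_c G t tau p 1 \<le> d_s c t tau p 1" by (simp add: d_s_at_1 d_c_at_1)
  then have w2: "w2 c G t tau p < 1" using dc_le_ds[of 1] wb b1 by auto
  show "crossing_pattern (d_c G t tau p) (d_s c t tau p) (w0 c G t tau p) (w2 c G t tau p)"
    unfolding crossing_pattern_def w0 s_def[symmetric] b_def[symmetric]
    using b0 wb w2 ab dc_nonneg dc_nonpos ds_nonneg dc_le_ds ds_le_dc
    by (auto simp: a_def b_def)
qed

lemma coop_area_regionV: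
  assumes "0 < c" "c < G" "regionV c G t tau p"
  shows "coop_area c G t tau p
       = A_s c t tau p (w0 c G t tau p) (w1 c G t tau p) + A_c G t tau p (w1 c G t tau p) 1"
proof -
  have pat: "crossing_pattern (d_s c t tau p) (d_c G t tau p) (w0 c G t tau p) (w1 c G t tau p)"
    by (rule regionV_crossing_pattern(2)[OF assms])
  have tau: "0 < tau" "tau < t" and p: "c < p"
    using assms(3) by (simp_all add: regionV_def in_D_def)
  have "(d_s c t tau p has_integral A_s c t tau p (w0 c G t tau p) (w1 c G t tau p))
      {w0 c G t tau p..w1 c G t tau p}"
    using pat p assms(1) by (intro has_integral_A_s) (auto simp: crossing_pattern_def)
  moreover have "(d_c G t tau p has_integral A_c G t tau p (w1 c G t tau p) 1) {w1 c G t tau p..1}"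
    using pat tau assms(1,2) by (intro has_integral_A_c) (auto simp: crossing_pattern_def)
  ultimately show ?thesis
    unfolding coop_area_def by (intro integral_unique has_integral_clipped_min[OF pat])
qed

lemma coop_area_regionVI:
  assumes "0 < c" "c < G" "regionVI c G t tau p"
  shows "coop_area c G t tau p
       = A_c G t tau p (w0 c G t tau p) (w2 c G t tau p) + A_s c t tau p (w2 c G t tau p) 1"
proof -
  have pat: "crossing_pattern (d_c G t tau p) (d_s c t tau p) (w0 c G t tau p) (w2 c G t tau p)"
    by (rule regionVI_crossing_pattern(2)[OF assms])
  have tau: "0 < tau" "tau < t" and p: "c < p"
    using assms(3) by (simp_all add: regionVI_def in_D_def)
  have "(d_c G t tau p has_integral A_c G t tau p (w0 c G t tau p) (w2 c G t tau p))
      {w0 c G t tau p..w2 c G t tau p}"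
    using pat tau assms(1,2) by (intro has_integral_A_c) (auto simp: crossing_pattern_def)
  moreover have "(d_s c t tau p has_integral A_s c t tau p (w2 c G t tau p) 1) {w2 c G t tau p..1}"
    using pat p assms(1) by (intro has_integral_A_s) (auto simp: crossing_pattern_def)
  ultimately show ?thesis
    unfolding coop_area_def min.commute[of "d_s c t tau p _"]
    by (intro integral_unique has_integral_clipped_min[OF pat])
qed

section \<open>First-order conditions\<close>

definition coop_area_V_closed :: "real \<Rightarrow> real \<Rightarrow> real \<Rightarrow> real \<Rightarrow> real \<Rightarrow> real" where
  "coop_area_V_closed c G t tau q =
     d_s_prim c (tau / t) q (w1 c G t tau q) - d_s_prim c (tau / t) q (d_s_root c (tau / t) q)
     + (d_c_prim G (tau / t) q 1 - d_c_prim G (tau / t) q (w1 c G t tau q))"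

definition coop_area_VI_closed :: "real \<Rightarrow> real \<Rightarrow> real \<Rightarrow> real \<Rightarrow> real \<Rightarrow> real" where
  "coop_area_VI_closed c G t tau q =
     d_c_prim G (tau / t) q (w2 c G t tau q) - d_c_prim G (tau / t) q (d_c_root G (tau / t) q)
     + (d_s_prim c (tau / t) q 1 - d_s_prim c (tau / t) q (w2 c G t tau q))"

lemma regionV_areas_eq_prim:
  assumes "0 < c" "c < G" "regionV c G t tau p"
  shows "A_s c t tau p (w0 c G t tau p) (w1 c G t tau p)
       = d_s_prim c (tau / t) p (w1 c G t tau p) - d_s_prim c (tau / t) p (w0 c G t tau p)"
    and "A_c G t tau p (w1 c G t tau p) 1
       = d_c_prim G (tau / t) p 1 - d_c_prim G (tau / t) p (w1 c G t tau p)"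
proof -
  have "0 < tau / t" "tau / t < 1" "c < p"
    using assms(3) by (simp_all add: regionV_def in_D_def)
  moreover have "0 < w0 c G t tau p" "w0 c G t tau p \<le> w1 c G t tau p" "w1 c G t tau p \<le> 1"
    using regionV_crossing_pattern(2)[OF assms] by (simp_all add: crossing_pattern_def)
  ultimately show "A_s c t tau p (w0 c G t tau p) (w1 c G t tau p)
       = d_s_prim c (tau / t) p (w1 c G t tau p) - d_s_prim c (tau / t) p (w0 c G t tau p)"
    and "A_c G t tau p (w1 c G t tau p) 1
       = d_c_prim G (tau / t) p 1 - d_c_prim G (tau / t) p (w1 c G t tau p)"
    using assms(1,2) by (simp_all add: A_s_eq_prim A_c_eq_prim)
qed

lemma regionVI_areas_eq_prim:
  assumes "0 < c" "c < G" "regionVI c G t tau p"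
  shows "A_c G t tau p (w0 c G t tau p) (w2 c G t tau p)
       = d_c_prim G (tau / t) p (w2 c G t tau p) - d_c_prim G (tau / t) p (w0 c G t tau p)"
    and "A_s c t tau p (w2 c G t tau p) 1
       = d_s_prim c (tau / t) p 1 - d_s_prim c (tau / t) p (w2 c G t tau p)"
proof -
  have "0 < tau / t" "tau / t < 1" "c < p"
    using assms(3) by (simp_all add: regionVI_def in_D_def)
  moreover have "0 < w0 c G t tau p" "w0 c G t tau p \<le> w2 c G t tau p" "w2 c G t tau p \<le> 1"
    using regionVI_crossing_pattern(2)[OF assms] by (simp_all add: crossing_pattern_def)
  ultimately show "A_c G t tau p (w0 c G t tau p) (w2 c G t tau p)
       = d_c_prim G (tau / t) p (w2 c G t tau p) - d_c_prim G (tau / t) p (w0 c G t tau p)"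
    and "A_s c t tau p (w2 c G t tau p) 1
       = d_s_prim c (tau / t) p 1 - d_s_prim c (tau / t) p (w2 c G t tau p)"
    using assms(1,2) by (simp_all add: A_s_eq_prim A_c_eq_prim)
qed

lemma coop_area_eq_V_closed:
  assumes "0 < c" "c < G" "regionV c G t tau p"
  shows "coop_area c G t tau p = coop_area_V_closed c G t tau p"
  using coop_area_regionV[OF assms] regionV_areas_eq_prim[OF assms]
    regionV_crossing_pattern(1)[OF assms]
  by (simp add: coop_area_V_closed_def)

lemma coop_area_eq_VI_closed:
  assumes "0 < c" "c < G" "regionVI c G t tau p"
  shows "coop_area c G t tau p = coop_area_VI_closed c G t tau p"
  using coop_area_regionVI[OF assms] regionVI_areas_eq_prim[OF assms]
    regionVI_crossing_pattern(1)[OF assms]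
  by (simp add: coop_area_VI_closed_def)

lemma coop_area_V_closed_has_derivative:
  assumes c: "0 < c" "c < G" and R: "regionV c G t tau p"
  shows "(coop_area_V_closed c G t tau has_real_derivative
      (A_c G t tau p (w1 c G t tau p) 1 - A_s c t tau p (w0 c G t tau p) (w1 c G t tau p)
        - (1 - 2 * w1 c G t tau p + w0 c G t tau p)) / p) (at p)"
proof -
  define s where "s = tau / t"
  define X where "X = (\<lambda>q. d_s_root c s q)"
  define Y where "Y = (\<lambda>q. w1 c G t tau q)"
  have tau: "0 < tau" "tau < t" and p: "c < p" "sqrt (c * G) < p"
    using R by (simp_all add: regionV_def in_D_def Let_def)
  have s: "0 < s" "s < 1" using tau by (simp_all add: s_def)
  have G: "0 < G" and p0: "0 < p" using c p by simp_all
  have cs: "c * s < c" using c s by simp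
  have pat: "crossing_pattern (d_s c t tau p) (d_c G t tau p) (X p) (Y p)"
    using regionV_crossing_pattern[OF c R] by (simp add: X_def Y_def s_def)
  then have XY: "0 < X p" "0 < Y p" "Y p \<le> 1"
    by (auto simp: crossing_pattern_def)
  have "X differentiable (at p)"
    unfolding X_def d_s_root_def real_differentiable_def using p cs
    by (auto intro!: exI derivative_eq_intros)
  then obtain X' where dX: "(X has_real_derivative X') (at p)"
    by (auto simp: real_differentiable_def)
  have "Y differentiable (at p)"
    unfolding Y_def using tau
    by (intro w1_differentiable[OF c(1) G _ discriminant_pos_if_sqrt_less[OF c(1) G p(2)]]) simp
  then obtain Y' where dY: "(Y has_real_derivative Y') (at p)"
    by (auto simp: real_differentiable_def)
  have "(coop_area_V_closed c G t tau has_real_derivative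
        ((Y p - d_s_prim c s p (Y p)) / p + d_s c t tau p (Y p) * Y')
      - ((X p - d_s_prim c s p (X p)) / p + d_s c t tau p (X p) * X')
      + (((d_c_prim G s p 1 - 1) / p + d_c G t tau p 1 * 0)
      - ((d_c_prim G s p (Y p) - Y p) / p + d_c G t tau p (Y p) * Y'))) (at p)"
    unfolding coop_area_V_closed_def[abs_def] s_def[symmetric] X_def[symmetric] Y_def[symmetric]
    using XY p0 s G
    by (intro DERIV_add DERIV_diff d_s_prim_chain[OF s_def] d_c_prim_chain[OF s_def]
        dX dY DERIV_const) (auto intro: K_pos)
  then show ?thesis
    by (rule DERIV_cong)
       (use crossing_pattern_endpoints[OF pat] p0 in \<open>simp add: X_def Y_def s_def field_simps
          regionV_crossing_pattern(1)[OF c R, symmetric] regionV_areas_eq_prim[OF c R]\<close>)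
qed

lemma coop_area_VI_closed_has_derivative:
  assumes c: "0 < c" "c < G" and R: "regionVI c G t tau p"
  shows "(coop_area_VI_closed c G t tau has_real_derivative
      (A_c G t tau p (w0 c G t tau p) (w2 c G t tau p) - A_s c t tau p (w2 c G t tau p) 1
        + (1 - 2 * w2 c G t tau p + w0 c G t tau p)) / p) (at p)"
proof -
  define s where "s = tau / t"
  define X where "X = (\<lambda>q. d_c_root G s q)"
  define Y where "Y = (\<lambda>q. w2 c G t tau q)"
  have tau: "0 < tau" "tau < t" and p: "c < p" "G * (1 - s) + c * s < p"
    using R by (simp_all add: regionVI_def in_D_def Let_def s_def)
  have s: "0 < s" "s < 1" using tau by (simp_all add: s_def)
  have G: "0 < G" and p0: "0 < p" using c p by simp_all
  have pat: "crossing_pattern (d_c G t tau p) (d_s c t tau p) (X p) (Y p)"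
    using regionVI_crossing_pattern[OF c R] by (simp add: X_def Y_def s_def)
  then have XY: "0 < X p" "0 < Y p" "Y p \<le> 1"
    by (auto simp: crossing_pattern_def)
  have "X differentiable (at p)"
    unfolding X_def d_c_root_def real_differentiable_def using G s
    by (auto intro!: exI derivative_eq_intros)
  then obtain X' where dX: "(X has_real_derivative X') (at p)"
    by (auto simp: real_differentiable_def)
  have "4 * c * G * s * (1 - s) < p\<^sup>2"
    using discriminant_pos_if_less[OF c(1) G _ _ p(2)] s by simp
  then have "Y differentiable (at p)"
    unfolding Y_def s_def using tau by (intro w2_differentiable[OF c(1) G]) simp_all
  then obtain Y' where dY: "(Y has_real_derivative Y') (at p)"
    by (auto simp: real_differentiable_def)
  have "(coop_area_VI_closed c G t tau has_real_derivative
        ((d_c_prim G s p (Y p) - Y p) / p + d_c G t tau p (Y p) * Y')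
      - ((d_c_prim G s p (X p) - X p) / p + d_c G t tau p (X p) * X')
      + (((1 - d_s_prim c s p 1) / p + d_s c t tau p 1 * 0)
      - ((Y p - d_s_prim c s p (Y p)) / p + d_s c t tau p (Y p) * Y'))) (at p)"
    unfolding coop_area_VI_closed_def[abs_def] s_def[symmetric] X_def[symmetric] Y_def[symmetric]
    using XY p0 s G
    by (intro DERIV_add DERIV_diff d_s_prim_chain[OF s_def] d_c_prim_chain[OF s_def]
        dX dY DERIV_const) (auto intro: K_pos)
  then show ?thesis
    by (rule DERIV_cong)
       (use crossing_pattern_endpoints[OF pat] p0 in \<open>simp add: X_def Y_def s_def field_simps
          regionVI_crossing_pattern(1)[OF c R, symmetric] regionVI_areas_eq_prim[OF c R]\<close>)
qed

lemma regionV_first_order_condition: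
  assumes c: "0 < c" "c < G" and R: "regionV c G t tau p"
    and max: "\<forall>q. regionV c G t tau q \<longrightarrow> coop_area c G t tau q \<le> coop_area c G t tau p"
  shows "A_c G t tau p (w1 c G t tau p) 1 - A_s c t tau p (w0 c G t tau p) (w1 c G t tau p)
       = 1 - 2 * w1 c G t tau p + w0 c G t tau p"
proof -
  define I where "I = {sqrt (c * G)<..<G * (1 - tau / t) + c * (tau / t)}"
  have tau: "0 < tau" "tau < t" and p0: "0 < p"
    using R c by (simp_all add: regionV_def in_D_def)
  have region: "regionV c G t tau q \<longleftrightarrow> q \<in> I" for q
    using regionV_iff[OF c] tau by (simp add: I_def)
  have "(A_c G t tau p (w1 c G t tau p) 1 - A_s c t tau p (w0 c G t tau p) (w1 c G t tau p)
        - (1 - 2 * w1 c G t tau p + w0 c G t tau p)) / p = 0"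
    using coop_area_V_closed_has_derivative[OF c R]
  proof (rule DERIV_open_max_eq_0)
    show "p \<in> I" using R region by simp
    show "coop_area_V_closed c G t tau q \<le> coop_area_V_closed c G t tau p" if "q \<in> I" for q
      using max that R region[of q] by (simp add: coop_area_eq_V_closed[OF c, symmetric])
  qed (simp add: I_def)
  then show ?thesis using p0 by simp
qed

lemma regionVI_first_order_condition:
  assumes c: "0 < c" "c < G" and R: "regionVI c G t tau p"
    and max: "\<forall>q. regionVI c G t tau q \<longrightarrow> coop_area c G t tau q \<le> coop_area c G t tau p"
  shows "A_s c t tau p (w2 c G t tau p) 1 - A_c G t tau p (w0 c G t tau p) (w2 c G t tau p)
       = 1 - 2 * w2 c G t tau p + w0 c G t tau p"
proof -
  define I where "I = {G * (1 - tau / t) + c * (tau / t)<..<sqrt (c * G)}"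
  have tau: "0 < tau" "tau < t" and p0: "0 < p"
    using R c by (simp_all add: regionVI_def in_D_def)
  have region: "regionVI c G t tau q \<longleftrightarrow> q \<in> I" for q
    using regionVI_iff[OF c] tau by (simp add: I_def)
  have "(A_c G t tau p (w0 c G t tau p) (w2 c G t tau p) - A_s c t tau p (w2 c G t tau p) 1
        + (1 - 2 * w2 c G t tau p + w0 c G t tau p)) / p = 0"
    using coop_area_VI_closed_has_derivative[OF c R]
  proof (rule DERIV_open_max_eq_0)
    show "p \<in> I" using R region by simp
    show "coop_area_VI_closed c G t tau q \<le> coop_area_VI_closed c G t tau p" if "q \<in> I" for q
      using max that R region[of q] by (simp add: coop_area_eq_VI_closed[OF c, symmetric])
  qed (simp add: I_def)
  then show ?thesis using p0 by simp
qed

theorem proposition3: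
  fixes c G t :: real
  assumes "0 < c" and "c < G" and "0 < t"
  shows "(\<forall>tau' p'. regionV c G t tau' p' \<and>
            (\<forall>tau p. regionV c G t tau p \<longrightarrow> coop_area c G t tau p \<le> coop_area c G t tau' p') \<longrightarrow>
            A_c G t tau' p' (w1 c G t tau' p') 1 - A_s c t tau' p' (w0 c G t tau' p') (w1 c G t tau' p')
              = 1 - 2 * w1 c G t tau' p' + w0 c G t tau' p')
       \<and> (\<forall>tau' p'. regionVI c G t tau' p' \<and>
            (\<forall>tau p. regionVI c G t tau p \<longrightarrow> coop_area c G t tau p \<le> coop_area c G t tau' p') \<longrightarrow>
            A_s c t tau' p' (w2 c G t tau' p') 1 - A_c G t tau' p' (w0 c G t tau' p') (w2 c G t tau' p')
              = 1 - 2 * w2 c G t tau' p' + w0 c G t tau' p')"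
  using regionV_first_order_condition[OF assms(1,2)] regionVI_first_order_condition[OF assms(1,2)]
  by blast

end
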